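(* Let $b\in\mathbb{C}\setminus\{0,1\}$, let $\mu\ge 0$ be an integer, and let \[ W_\mu=\operatorname{span}_{\mathbb{C}}\{r_1(z),\dots,r_\mu(z)\}\oplus H_\mu \qquad(\text{so } W_0=H_0), \] where $r_i(z)=z^{-i}\big(b\,e^{z}+(1-b)\sum_{j=0}^{i-1}z^j/j!\big)$. Then $W_\mu\in Gr^{(0)}(H)$, $W_\mu$ satisfies the CKP condition, i.e. $\operatorname{Res}_z f(z)g(-z)=0$ for all $f,g\in W_\mu$, and \[ W_\mu=\{\,f(z)\in H_{-\mu}\;:\;\operatorname{Res}_z f(z)\,r_i(-z)=0\ \text{ for } 1\le i\le \mu\,\}. \]
   Context: Work in $H=\mathbb{C}((z))$, formal Laurent series in $z$ with finitely many negative powers, with $e^z=\sum_{k\ge0}z^k/k!$. For $k\in\mathbb{Z}$, $H_k=z^k\mathbb{C}[[z]]$ (series whose lowest power is at least $k$). The bilinear form on $H$ is $(f,g)=\operatorname{Res}_z f(z)g(z)$ (coefficient of $z^{-1}$). $Gr(H)$ is the set of linear subspaces $W\subset H$ with $H_k\subset W\subset H_\ell$ for some integers $k>\ell$; $Gr^{(j)}(H)$ consists of those $W\in Gr(H)$ with $j=k-\dim(W/H_k)$ whenever $H_k\subset W$. *)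

theory Defs
  imports Complex_Main "HOL-Computational_Algebra.Formal_Laurent_Series"
begin

text \<open>H = C((z)) is modelled by the type complex fls.  Scalar multiplication
  by c is multiplication by the constant series fls_const c.\<close>

definition Hk :: "int \<Rightarrow> complex fls set" where
  "Hk k = {f. \<forall>n<k. fls_nth f n = 0}"

definition fls_exp_z :: "complex fls" where
  "fls_exp_z = fps_to_fls (fps_exp 1)"

definition res_pair :: "complex fls \<Rightarrow> complex fls \<Rightarrow> complex" where
  "res_pair f g = fls_residue (f * g)"

definition neg_z :: "complex fls \<Rightarrow> complex fls" where
  "neg_z f = fls_compose_fps f (- fps_X)"

definition is_lin_subspace :: "complex fls set \<Rightarrow> bool" where
  "is_lin_subspace W \<longleftrightarrow> 0 \<in> W \<and> (\<forall>f\<in>W. \<forall>g\<in>W. f + g \<in> W)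
     \<and> (\<forall>c. \<forall>f\<in>W. fls_const c * f \<in> W)"

definition quot_dim :: "complex fls set \<Rightarrow> complex fls set \<Rightarrow> nat" where
  "quot_dim W U = (LEAST n. \<exists>v :: nat \<Rightarrow> complex fls. (\<forall>i<n. v i \<in> W) \<and>
      W \<subseteq> {(\<Sum>i<n. fls_const (c i) * v i) + u | c u. u \<in> U})"

definition Gr :: "complex fls set set" where
  "Gr = {W. is_lin_subspace W \<and> (\<exists>k l. k > l \<and> Hk k \<subseteq> W \<and> W \<subseteq> Hk l)}"

definition Gr_j :: "int \<Rightarrow> complex fls set set" where
  "Gr_j j = {W \<in> Gr. \<forall>k. Hk k \<subseteq> W \<longrightarrow> j = k - int (quot_dim W (Hk k))}"

definition CKP :: "complex fls set \<Rightarrow> bool" where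
  "CKP W \<longleftrightarrow> (\<forall>f\<in>W. \<forall>g\<in>W. fls_residue (f * neg_z g) = 0)"

definition r_fun :: "complex \<Rightarrow> nat \<Rightarrow> complex fls" where
  "r_fun b i = fls_X_intpow (- int i) *
     (fls_const b * fls_exp_z
      + fls_const (1 - b) * (\<Sum>j<i. fls_const (1 / of_nat (fact j)) * fls_X ^ j))"

definition W_mu :: "complex \<Rightarrow> nat \<Rightarrow> complex fls set" where
  "W_mu b \<mu> = {(\<Sum>i\<in>{1..\<mu>}. fls_const (c i) * r_fun b i) + h | c h. h \<in> Hk (int \<mu>)}"

end

theory Submission
  imports Defs
begin

(*
  The coefficient of z^n in r_i is 1/(n+i)! for -i <= n < 0 and b/(n+i)! for n >= 0. Hence, with
  N = i+j-1 > 0, the residue of r_i(z) r_j(-z) is +-b times the alternating sum of 1/(m! (N-m)!)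
  over 0 <= m <= N, which vanishes by the binomial theorem. As Res f(z) g(-z) = 0 for f in H_a,
  g in H_c and a + c >= 0, this gives the CKP condition.

  Since r_i starts with z^(-i), the functionals g |-> Res g(z) r_i(-z) are triangular on H_0:
  for g in H_l, pairing with r_(l+1) just reads off the coefficient g_l. Subtracting multiples of
  the r_i moves any f in H_(-mu) into H_0, so triangularity yields the description of W_mu by
  residues; it also shows that H_k is contained in W_mu only for k >= mu. For such k, W_mu/H_k is
  spanned by the k vectors r_1, ..., r_mu, z^mu, ..., z^(k-1), and no fewer vectors suffice:
  for each of the k exponents j in [-mu, 0) and [mu, k), W_mu contains an element whose
  coefficients at these exponents are those of z^j. Hence W_mu lies in Gr^(0).
*)

unbundle fps_syntax

lemma fls_exp_z_nth: "fls_exp_z $$ n = (if n < 0 then 0 else 1 / fact (nat n))"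
  by (simp add: fls_exp_z_def fps_exp_def)

lemma exp_partial_sum_nth:
  "(\<Sum>j<i. fls_const (1 / of_nat (fact j)) * fls_X ^ j :: complex fls) $$ n
     = (if 0 \<le> n \<and> n < int i then 1 / fact (nat n) else 0)"
proof (cases "n \<ge> 0")
  case True
  then obtain m where "n = int m"
    by (metis nonneg_eq_int)
  moreover have "(\<Sum>j<i. (if m = j then 1 else 0) / fact j :: complex) = (if m < i then 1 / fact m else 0)"
    by (simp add: if_distrib[of "\<lambda>x. x / _"] sum.delta cong: if_cong)
  ultimately show ?thesis
    by (simp add: fls_nth_sum)
qed (simp add: fls_nth_sum)

lemma r_fun_nth:
  "r_fun b i $$ n = (if n < - int i then 0
     else if n < 0 then 1 / fact (nat (n + int i)) else b / fact (nat (n + int i)))"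
proof -
  have "r_fun b i $$ n = b * fls_exp_z $$ (n + int i) + (1 - b) *
     (\<Sum>j<i. fls_const (1 / of_nat (fact j)) * fls_X ^ j :: complex fls) $$ (n + int i)"
    unfolding r_fun_def fls_X_intpow_times_conv_shift fls_shift_nth
    by (simp only: fls_plus_nth fls_mult_const_nth minus_minus)
  then show ?thesis
    unfolding fls_exp_z_nth exp_partial_sum_nth by (auto simp: field_simps)
qed

lemma neg_z_nth: "neg_z f $$ n = f $$ n * (-1) powi n"
proof -
  have "- fps_X = fps_const (-1 :: complex) * fps_X"
    by simp
  then show ?thesis
    unfolding neg_z_def by (metis fls_nth_fls_compose_fps_linear neg_equal_0_iff_equal one_neq_zero)
qed

lemma neg_z_add: "neg_z (f + g) = neg_z f + neg_z g"
  by (rule fls_eqI) (simp add: neg_z_nth algebra_simps)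

lemma neg_z_const_mult: "neg_z (fls_const c * f) = fls_const c * neg_z f"
  by (rule fls_eqI) (simp add: neg_z_nth)

lemma neg_z_sum: "neg_z (sum f A) = (\<Sum>i\<in>A. neg_z (f i))"
  by (rule fls_eqI) (simp add: neg_z_nth fls_nth_sum sum_distrib_right)

lemma Hk_zero [simp]: "0 \<in> Hk a"
  by (simp add: Hk_def)

lemma Hk_add: "f \<in> Hk a \<Longrightarrow> g \<in> Hk a \<Longrightarrow> f + g \<in> Hk a"
  by (simp add: Hk_def)

lemma Hk_diff: "f \<in> Hk a \<Longrightarrow> g \<in> Hk a \<Longrightarrow> f - g \<in> Hk a"
  by (simp add: Hk_def)

lemma Hk_const_mult: "f \<in> Hk a \<Longrightarrow> fls_const c * f \<in> Hk a"
  by (simp add: Hk_def)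

lemma Hk_sum: "(\<And>i. i \<in> A \<Longrightarrow> f i \<in> Hk a) \<Longrightarrow> sum f A \<in> Hk a"
  by (simp add: Hk_def fls_nth_sum)

lemma Hk_antimono: "a \<le> c \<Longrightarrow> Hk c \<subseteq> Hk a"
  by (auto simp: Hk_def)

lemma fls_X_intpow_in_Hk_iff: "(fls_X_intpow j :: complex fls) \<in> Hk a \<longleftrightarrow> a \<le> j"
  by (auto simp: Hk_def not_le)

lemma Hk_next: "f \<in> Hk k \<Longrightarrow> f $$ k = 0 \<Longrightarrow> f \<in> Hk (k + 1)"
  by (auto simp: Hk_def order_le_less)

lemma Hk_times_nth:
  assumes "f \<in> Hk a" and "g \<in> Hk c"
  shows "(f * g) $$ n = (\<Sum>i=a..n - c. f $$ i * g $$ (n - i))"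
proof (cases "f = 0 \<or> g = 0")
  case False
  then have "a \<le> fls_subdegree f" and "c \<le> fls_subdegree g"
    using assms by (auto simp: Hk_def intro: fls_subdegree_geI)
  moreover have "f $$ i * g $$ (n - i) = 0"
    if "i < fls_subdegree f \<or> n - i < fls_subdegree g" for i
    using that by (auto simp: nth_less_subdegree_zero)
  ultimately have "(\<Sum>i=fls_subdegree f..n - fls_subdegree g. f $$ i * g $$ (n - i))
      = (\<Sum>i=a..n - c. f $$ i * g $$ (n - i))"
    by (intro sum.mono_neutral_left) auto
  then show ?thesis
    by (simp add: fls_times_nth(2))
qed auto

lemma Hk_mult: "f \<in> Hk a \<Longrightarrow> g \<in> Hk c \<Longrightarrow> f * g \<in> Hk (a + c)"
  by (simp add: Hk_def Hk_times_nth)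

lemma neg_z_in_Hk: "f \<in> Hk a \<Longrightarrow> neg_z f \<in> Hk a"
  by (simp add: Hk_def neg_z_nth)

lemma residue_times_neg_z_in_Hk:
  assumes "f \<in> Hk a" and "g \<in> Hk c" and "0 \<le> a + c"
  shows "fls_residue (f * neg_z g) = 0"
  using Hk_mult[OF assms(1) neg_z_in_Hk[OF assms(2)]] assms(3) by (simp add: Hk_def)

lemma r_fun_in_Hk: "r_fun b i \<in> Hk (- int i)"
  by (simp add: Hk_def r_fun_nth)

lemma alternating_sum_inverse_fact:
  assumes "0 < N"
  shows "(\<Sum>m\<le>N. (-1) ^ m / (fact m * fact (N - m)) :: 'a :: field_char_0) = 0"
proof -
  have "(\<Sum>m\<le>N. (-1) ^ m / (fact m * fact (N - m)) :: 'a)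
      = (\<Sum>m\<le>N. (-1) ^ m * of_nat (N choose m)) / fact N"
    by (simp add: sum_divide_distrib binomial_fact field_simps)
  also have "\<dots> = 0"
    using choose_alternating_sum[OF assms] by simp
  finally show ?thesis .
qed

lemma residue_r_fun_times_neg_z_r_fun:
  assumes "1 \<le> i" and "1 \<le> j"
  shows "fls_residue (r_fun b i * neg_z (r_fun b j)) = 0"
proof -
  define N where "N = i + j - 1"
  have "fls_residue (r_fun b i * neg_z (r_fun b j))
      = (\<Sum>t=- int i..int j - 1. r_fun b i $$ t * neg_z (r_fun b j) $$ (-1 - t))"
    using Hk_times_nth[OF r_fun_in_Hk neg_z_in_Hk[OF r_fun_in_Hk]] by (simp add: fls_residue_def)
  also have "\<dots> = (\<Sum>m\<le>N. r_fun b i $$ (int m - int i) * neg_z (r_fun b j) $$ (int i - 1 - int m))"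
    by (rule sum.reindex_bij_witness[of _ "\<lambda>m. int m - int i" "\<lambda>t. nat (t + int i)"])
      (use assms in \<open>auto simp: N_def\<close>)
  also have "\<dots> = (\<Sum>m\<le>N. b * (-1) ^ Suc i * ((-1) ^ m / (fact m * fact (N - m))))"
  proof (rule sum.cong[OF refl])
    fix m assume "m \<in> {..N}"
    then have m: "m \<le> N" by simp
    have "r_fun b i $$ (int m - int i) = (if m < i then 1 else b) / fact m"
      by (simp add: r_fun_nth)
    moreover have "r_fun b j $$ (int i - 1 - int m) = (if m < i then b else 1) / fact (N - m)"
    proof -
      have "- int j \<le> int i - 1 - int m" and "nat (int i - 1 - int m + int j) = N - m"
        using assms m by (auto simp: N_def)
      then show ?thesis
        by (auto simp: r_fun_nth)
    qed
    moreover have "(-1 :: complex) powi (int i - 1 - int m) = (-1) ^ Suc i * (-1) ^ m"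
      by (simp add: power_int_minus_left minus_one_power_iff)
    ultimately show "r_fun b i $$ (int m - int i) * neg_z (r_fun b j) $$ (int i - 1 - int m)
        = b * (-1) ^ Suc i * ((-1) ^ m / (fact m * fact (N - m)))"
      by (simp add: neg_z_nth)
  qed
  also have "\<dots> = b * (-1) ^ Suc i * (\<Sum>m\<le>N. (-1) ^ m / (fact m * fact (N - m)))"
    by (simp only: sum_distrib_left)
  also have "\<dots> = 0"
  proof -
    have "0 < N"
      using assms by (simp add: N_def)
    then show ?thesis
      by (simp add: alternating_sum_inverse_fact)
  qed
  finally show ?thesis .
qed

lemma residue_times_neg_z_r_fun:
  assumes "g \<in> Hk (int l)"
  shows "fls_residue (g * neg_z (r_fun b (Suc l))) = (-1) ^ Suc l * g $$ int l"
proof -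
  have "fls_residue (g * neg_z (r_fun b (Suc l))) = g $$ int l * neg_z (r_fun b (Suc l)) $$ (- int (Suc l))"
    using Hk_times_nth[OF assms neg_z_in_Hk[OF r_fun_in_Hk]] by (simp add: fls_residue_def)
  moreover have "(-1 :: complex) powi (- int (Suc l)) = (-1) ^ Suc l"
    by (simp add: power_int_minus_left)
  ultimately show ?thesis
    by (simp add: neg_z_nth r_fun_nth)
qed

lemma Hk_if_residues_vanish:
  assumes "g \<in> Hk 0" and "\<forall>i\<in>{1..\<mu>}. fls_residue (g * neg_z (r_fun b i)) = 0"
  shows "g \<in> Hk (int \<mu>)"
proof -
  have "g \<in> Hk (int l)" if "l \<le> \<mu>" for l
    using that
  proof (induction l)
    case 0
    show ?case using assms(1) by simp
  next
    case (Suc l)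
    then have "g \<in> Hk (int l)" by simp
    moreover have "fls_residue (g * neg_z (r_fun b (Suc l))) = 0"
      using assms(2) Suc.prems by simp
    ultimately have "g $$ int l = 0"
      using residue_times_neg_z_r_fun[of g l b] by simp
    with \<open>g \<in> Hk (int l)\<close> show ?case
      using Hk_next[of g "int l"] by (simp add: add.commute)
  qed
  then show ?thesis by simp
qed

definition r_comb :: "complex \<Rightarrow> nat \<Rightarrow> (nat \<Rightarrow> complex) \<Rightarrow> complex fls" where
  "r_comb b n c = (\<Sum>i\<in>{1..n}. fls_const (c i) * r_fun b i)"

lemma W_mu_eq_r_comb: "W_mu b \<mu> = {r_comb b \<mu> c + h | c h. h \<in> Hk (int \<mu>)}"
  by (simp add: W_mu_def r_comb_def)

lemma r_comb_in_Hk: "r_comb b n c \<in> Hk (- int n)"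
  unfolding r_comb_def
  by (intro Hk_sum Hk_const_mult) (auto intro: subsetD[OF Hk_antimono r_fun_in_Hk])

lemma r_comb_in_W_mu: "r_comb b \<mu> c \<in> W_mu b \<mu>"
proof -
  have "r_comb b \<mu> c = r_comb b \<mu> c + 0"
    by simp
  then show ?thesis
    unfolding W_mu_eq_r_comb using Hk_zero by blast
qed

lemma r_fun_in_W_mu: "i \<in> {1..\<mu>} \<Longrightarrow> r_fun b i \<in> W_mu b \<mu>"
  using r_comb_in_W_mu[of b \<mu> "\<lambda>k. if k = i then 1 else 0"]
  by (simp add: r_comb_def if_distrib[of "\<lambda>x. fls_const x * _"] sum.delta cong: if_cong)

lemma Hk_subset_W_mu: "Hk (int \<mu>) \<subseteq> W_mu b \<mu>"
proof
  fix h assume "h \<in> Hk (int \<mu>)"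
  moreover have "h = r_comb b \<mu> (\<lambda>_. 0) + h"
    by (simp add: r_comb_def)
  ultimately show "h \<in> W_mu b \<mu>"
    unfolding W_mu_eq_r_comb by blast
qed

lemma W_mu_subset_Hk: "W_mu b \<mu> \<subseteq> Hk (- int \<mu>)"
  unfolding W_mu_eq_r_comb
  by (auto intro!: Hk_add r_comb_in_Hk elim: subsetD[OF Hk_antimono, rotated])

lemma residue_r_comb_times_neg_z_r_comb: "fls_residue (r_comb b n c * neg_z (r_comb b n d)) = 0"
proof -
  have "r_comb b n c * neg_z (r_comb b n d) =
     (\<Sum>i\<in>{1..n}. \<Sum>k\<in>{1..n}. fls_const (c i * d k) * (r_fun b i * neg_z (r_fun b k)))"
    unfolding r_comb_def neg_z_sum neg_z_const_mult sum_product
    by (intro sum.cong refl) (simp flip: fls_const_mult_const add: algebra_simps)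
  then show ?thesis
    using residue_r_fun_times_neg_z_r_fun by (simp add: fls_nth_sum)
qed

lemma W_mu_CKP:
  assumes "f \<in> W_mu b \<mu>" and "g \<in> W_mu b \<mu>"
  shows "fls_residue (f * neg_z g) = 0"
proof -
  obtain c h where f: "f = r_comb b \<mu> c + h" and h: "h \<in> Hk (int \<mu>)"
    using assms(1) by (auto simp: W_mu_eq_r_comb)
  obtain d h' where g: "g = r_comb b \<mu> d + h'" and h': "h' \<in> Hk (int \<mu>)"
    using assms(2) by (auto simp: W_mu_eq_r_comb)
  have "f * neg_z g = r_comb b \<mu> c * neg_z (r_comb b \<mu> d) + r_comb b \<mu> c * neg_z h' + h * neg_z g"
    unfolding f g neg_z_add by (simp add: algebra_simps)
  moreover have "fls_residue (r_comb b \<mu> c * neg_z h') = 0"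
    using r_comb_in_Hk h' by (rule residue_times_neg_z_in_Hk) simp
  moreover have "fls_residue (h * neg_z g) = 0"
    using h subsetD[OF W_mu_subset_Hk assms(2)] by (rule residue_times_neg_z_in_Hk) simp
  ultimately show ?thesis
    using residue_r_comb_times_neg_z_r_comb[of b \<mu> c d] by simp
qed

lemma ex_r_comb_diff_in_Hk_0: "f \<in> Hk (- int n) \<Longrightarrow> \<exists>c. f - r_comb b n c \<in> Hk 0"
proof (induction n arbitrary: f)
  case 0
  then show ?case by (simp add: r_comb_def)
next
  case (Suc n)
  define a where "a = f $$ (- int (Suc n))"
  have "f - fls_const a * r_fun b (Suc n) \<in> Hk (- int (Suc n))"
    using Suc.prems r_fun_in_Hk by (intro Hk_diff Hk_const_mult)
  moreover have "(f - fls_const a * r_fun b (Suc n)) $$ (- int (Suc n)) = 0"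
    by (simp add: a_def r_fun_nth)
  ultimately have "f - fls_const a * r_fun b (Suc n) \<in> Hk (- int n)"
    using Hk_next by fastforce
  then obtain c where c: "f - fls_const a * r_fun b (Suc n) - r_comb b n c \<in> Hk 0"
    using Suc.IH by fastforce
  have "r_comb b (Suc n) (c(Suc n := a)) = r_comb b n c + fls_const a * r_fun b (Suc n)"
    by (simp add: r_comb_def)
  then have "f - r_comb b (Suc n) (c(Suc n := a)) = f - fls_const a * r_fun b (Suc n) - r_comb b n c"
    by (simp add: algebra_simps)
  with c show ?case
    by (metis (no_types))
qed

lemma W_mu_eq_annihilator:
  "W_mu b \<mu> = {f \<in> Hk (- int \<mu>). \<forall>i\<in>{1..\<mu>}. fls_residue (f * neg_z (r_fun b i)) = 0}"
proof (intro equalityI subsetI CollectI conjI ballI)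
  fix f assume "f \<in> W_mu b \<mu>"
  then show "f \<in> Hk (- int \<mu>)"
    using W_mu_subset_Hk by blast
  show "fls_residue (f * neg_z (r_fun b i)) = 0" if "i \<in> {1..\<mu>}" for i
    using \<open>f \<in> W_mu b \<mu>\<close> r_fun_in_W_mu[OF that] by (rule W_mu_CKP)
next
  fix f assume "f \<in> {f \<in> Hk (- int \<mu>). \<forall>i\<in>{1..\<mu>}. fls_residue (f * neg_z (r_fun b i)) = 0}"
  then have f: "f \<in> Hk (- int \<mu>)" and res: "\<forall>i\<in>{1..\<mu>}. fls_residue (f * neg_z (r_fun b i)) = 0"
    by auto
  obtain c where c: "f - r_comb b \<mu> c \<in> Hk 0"
    using ex_r_comb_diff_in_Hk_0[OF f] by blast
  have "fls_residue ((f - r_comb b \<mu> c) * neg_z (r_fun b i)) = 0" if "i \<in> {1..\<mu>}" for i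
    using res that W_mu_CKP[OF r_comb_in_W_mu r_fun_in_W_mu[OF that]]
    by (simp add: left_diff_distrib)
  then have "f - r_comb b \<mu> c \<in> Hk (int \<mu>)"
    using c Hk_if_residues_vanish by blast
  moreover have "f = r_comb b \<mu> c + (f - r_comb b \<mu> c)"
    by simp
  ultimately show "f \<in> W_mu b \<mu>"
    unfolding W_mu_eq_r_comb by blast
qed

lemma W_mu_subspace: "is_lin_subspace (W_mu b \<mu>)"
  unfolding is_lin_subspace_def W_mu_eq_annihilator
  by (auto simp: Hk_add Hk_const_mult distrib_right mult.assoc)

lemma W_mu_in_Gr: "W_mu b \<mu> \<in> Gr"
  unfolding Gr_def
proof (intro CollectI conjI exI)
  show "is_lin_subspace (W_mu b \<mu>)"
    by (rule W_mu_subspace)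
  show "Hk (int \<mu> + 1) \<subseteq> W_mu b \<mu>"
    by (rule order_trans[OF Hk_antimono Hk_subset_W_mu]) simp
  show "W_mu b \<mu> \<subseteq> Hk (- int \<mu>)"
    by (rule W_mu_subset_Hk)
qed simp

lemma le_if_Hk_subset_W_mu:
  assumes "Hk k \<subseteq> W_mu b \<mu>"
  shows "int \<mu> \<le> k"
proof (rule ccontr)
  assume "\<not> int \<mu> \<le> k"
  then have X: "fls_X_intpow (int \<mu> - 1) \<in> W_mu b \<mu>"
    using assms fls_X_intpow_in_Hk_iff by fastforce
  have "fls_X_intpow (int \<mu> - 1) \<in> Hk (int \<mu>)"
  proof (cases "\<mu> = 0")
    case True
    then show ?thesis using X W_mu_subset_Hk by fastforce
  next
    case False
    then have "fls_X_intpow (int \<mu> - 1) \<in> Hk 0"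
      by (simp only: fls_X_intpow_in_Hk_iff)
    then show ?thesis
      using X by (intro Hk_if_residues_vanish) (auto simp: W_mu_eq_annihilator)
  qed
  then show False
    by (simp only: fls_X_intpow_in_Hk_iff)
qed

interpretation laurent: vector_space "\<lambda>c (f :: complex fls). fls_const c * f"
  by unfold_locales (simp_all add: algebra_simps flip: fls_plus_const)

lemma fls_X_intpow_eq_iff: "(fls_X_intpow i :: 'a :: zero_neq_one fls) = fls_X_intpow j \<longleftrightarrow> i = j"
proof
  assume "(fls_X_intpow i :: 'a fls) = fls_X_intpow j"
  then have "(fls_X_intpow i :: 'a fls) $$ i = fls_X_intpow j $$ i"
    by simp
  then show "i = j"
    by (simp split: if_splits)
qed simp

lemma independent_fls_X_intpow: "laurent.independent (range fls_X_intpow)"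
  unfolding laurent.independent_explicit_module
proof (intro allI impI)
  fix t :: "complex fls set" and u v
  assume t: "finite t" "t \<subseteq> range fls_X_intpow"
    and sum_eq_0: "(\<Sum>w\<in>t. fls_const (u w) * w) = 0" and "v \<in> t"
  then obtain j where v: "v = fls_X_intpow j"
    by auto
  have "0 = (\<Sum>w\<in>t. fls_const (u w) * w) $$ j"
    using sum_eq_0 by simp
  also have "\<dots> = (\<Sum>w\<in>t. if w = v then u w else 0)"
    unfolding fls_nth_sum
  proof (rule sum.cong[OF refl])
    fix w assume "w \<in> t"
    then obtain i where "w = fls_X_intpow i"
      using t by auto
    then show "(fls_const (u w) * w) $$ j = (if w = v then u w else 0)"
      by (simp add: v fls_X_intpow_eq_iff)
  qed
  also have "\<dots> = u v"
    using t \<open>v \<in> t\<close> by (simp add: sum.delta')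
  finally show "u v = 0"
    by simp
qed

definition fls_restrict :: "int set \<Rightarrow> 'a :: semiring_1 fls \<Rightarrow> 'a fls" where
  "fls_restrict J f = (\<Sum>j\<in>J. fls_const (f $$ j) * fls_X_intpow j)"

lemma fls_restrict_nth: "finite J \<Longrightarrow> fls_restrict J f $$ n = (if n \<in> J then f $$ n else 0)"
  by (simp add: fls_restrict_def fls_nth_sum if_distrib[of "\<lambda>x. _ * x"] cong: if_cong)

lemma card_le_if_spans_modulo:
  fixes W U :: "complex fls set"
  assumes "finite J" and U: "\<forall>u\<in>U. \<forall>j\<in>J. u $$ j = 0"
    and spans: "W \<subseteq> {(\<Sum>i<n. fls_const (c i) * v i) + u | c u. u \<in> U}"
    and "fls_X_intpow ` J \<subseteq> fls_restrict J ` W"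
  shows "card J \<le> n"
proof -
  have "fls_restrict J w \<in> laurent.span (fls_restrict J ` v ` {..<n})" if "w \<in> W" for w
  proof -
    from \<open>w \<in> W\<close> obtain c u where w: "w = (\<Sum>i<n. fls_const (c i) * v i) + u" and "u \<in> U"
      using spans by blast
    then have "fls_restrict J w = (\<Sum>i<n. fls_const (c i) * fls_restrict J (v i))"
      using \<open>finite J\<close> U by (intro fls_eqI) (simp add: fls_restrict_nth fls_nth_sum)
    also have "\<dots> \<in> laurent.span (fls_restrict J ` v ` {..<n})"
      by (intro laurent.span_sum laurent.span_scale laurent.span_base) auto
    finally show ?thesis .
  qed
  then have "fls_restrict J ` W \<subseteq> laurent.span (fls_restrict J ` v ` {..<n})"
    by blast
  with assms(4) have "fls_X_intpow ` J \<subseteq> laurent.span (fls_restrict J ` v ` {..<n})"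
    by (rule order_trans)
  moreover have "laurent.independent (fls_X_intpow ` J)"
    by (rule laurent.independent_mono[OF independent_fls_X_intpow]) auto
  ultimately have "card (fls_X_intpow ` J :: complex fls set) \<le> card (fls_restrict J ` v ` {..<n})"
    by (intro laurent.independent_span_bound[THEN conjunct2]) auto
  also have "\<dots> \<le> n"
    by (metis card_image_le card_lessThan finite_imageI finite_lessThan le_trans)
  finally show ?thesis
    by (simp add: card_image inj_on_def fls_X_intpow_eq_iff)
qed

lemma quot_dim_eqI:
  fixes W U :: "complex fls set"
  assumes "\<forall>i<n. v i \<in> W" and "W \<subseteq> {(\<Sum>i<n. fls_const (c i) * v i) + u | c u. u \<in> U}"
    and "finite J" and "card J = n" and "\<forall>u\<in>U. \<forall>j\<in>J. u $$ j = 0"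
    and "fls_X_intpow ` J \<subseteq> fls_restrict J ` W"
  shows "quot_dim W U = n"
  unfolding quot_dim_def
proof (rule Least_equality)
  show "\<exists>v. (\<forall>i<n. v i \<in> W) \<and> W \<subseteq> {(\<Sum>i<n. fls_const (c i) * v i) + u | c u. u \<in> U}"
    using assms(1,2) by blast
  show "n \<le> m"
    if "\<exists>v. (\<forall>i<m. v i \<in> W) \<and> W \<subseteq> {(\<Sum>i<m. fls_const (c i) * v i) + u | c u. u \<in> U}" for m
    using that card_le_if_spans_modulo[OF assms(3,5) _ assms(6)] assms(4) by blast
qed

definition W_mu_basis :: "complex \<Rightarrow> nat \<Rightarrow> nat \<Rightarrow> complex fls" where
  "W_mu_basis b \<mu> i = (if i < \<mu> then r_fun b (Suc i) else fls_X_intpow (int i))"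

lemma W_mu_basis_in_W_mu: "W_mu_basis b \<mu> i \<in> W_mu b \<mu>"
proof (cases "i < \<mu>")
  case True
  then show ?thesis
    by (simp add: W_mu_basis_def r_fun_in_W_mu)
next
  case False
  then have "fls_X_intpow (int i) \<in> Hk (int \<mu>)"
    by (simp only: fls_X_intpow_in_Hk_iff)
  then show ?thesis
    using False Hk_subset_W_mu by (auto simp: W_mu_basis_def)
qed

lemma Hk_diff_fls_restrict: "f \<in> Hk a \<Longrightarrow> f - fls_restrict {a..<k} f \<in> Hk k"
  by (simp add: Hk_def fls_restrict_nth)

lemma W_mu_spanned_by_basis:
  assumes "int \<mu> \<le> k"
  shows "W_mu b \<mu> \<subseteq> {(\<Sum>i<nat k. fls_const (c i) * W_mu_basis b \<mu> i) + u | c u. u \<in> Hk k}"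
proof
  fix w assume "w \<in> W_mu b \<mu>"
  then obtain c h where w: "w = r_comb b \<mu> c + h" and h: "h \<in> Hk (int \<mu>)"
    by (auto simp: W_mu_eq_r_comb)
  define c' where "c' i = (if i < \<mu> then c (Suc i) else h $$ int i)" for i
  have "(\<Sum>i<nat k. fls_const (c' i) * W_mu_basis b \<mu> i)
      = (\<Sum>i<\<mu>. fls_const (c' i) * W_mu_basis b \<mu> i)
        + (\<Sum>i\<in>{\<mu>..<nat k}. fls_const (c' i) * W_mu_basis b \<mu> i)"
    using assms by (simp add: sum.atLeastLessThan_concat flip: atLeast0LessThan)
  also have "(\<Sum>i<\<mu>. fls_const (c' i) * W_mu_basis b \<mu> i) = r_comb b \<mu> c"
    by (simp add: r_comb_def c'_def W_mu_basis_def sum.atLeast1_atMost_eq)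
  also have "(\<Sum>i\<in>{\<mu>..<nat k}. fls_const (c' i) * W_mu_basis b \<mu> i) = fls_restrict {int \<mu>..<k} h"
  proof -
    have "{int \<mu>..<k} = int ` {\<mu>..<nat k}"
      using assms by (simp add: image_int_atLeastLessThan)
    then show ?thesis
      by (simp add: fls_restrict_def c'_def W_mu_basis_def sum.reindex)
  qed
  finally have "w = (\<Sum>i<nat k. fls_const (c' i) * W_mu_basis b \<mu> i) + (h - fls_restrict {int \<mu>..<k} h)"
    using w by simp
  moreover have "h - fls_restrict {int \<mu>..<k} h \<in> Hk k"
    using h by (rule Hk_diff_fls_restrict)
  ultimately show "w \<in> {(\<Sum>i<nat k. fls_const (c i) * W_mu_basis b \<mu> i) + u | c u. u \<in> Hk k}"
    by blast
qed

lemma fls_X_intpow_in_restrict_W_mu: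
  fixes \<mu> :: nat and k :: int
  defines "J \<equiv> {- int \<mu>..<0} \<union> {int \<mu>..<k}"
  assumes "j \<in> J"
  shows "fls_X_intpow j \<in> fls_restrict J ` W_mu b \<mu>"
proof (cases "j < 0")
  case False
  then have "int \<mu> \<le> j"
    using assms by auto
  then have "fls_X_intpow j \<in> W_mu b \<mu>"
    using Hk_subset_W_mu fls_X_intpow_in_Hk_iff by blast
  moreover have "fls_restrict J (fls_X_intpow j) = fls_X_intpow j"
    using assms by (intro fls_eqI) (auto simp: fls_restrict_nth)
  ultimately show ?thesis
    by (metis image_eqI)
next
  case True
  then have "- int \<mu> \<le> j"
    using assms by auto
  then have "fls_X_intpow j \<in> Hk (- int \<mu>)"
    by (simp only: fls_X_intpow_in_Hk_iff)
  then obtain c where "fls_X_intpow j - r_comb b \<mu> c \<in> Hk 0"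
    using ex_r_comb_diff_in_Hk_0 by blast
  \<comment> \<open>The coefficients of the remainder g at the exponents in [mu, k) are cancelled
      by an element of H_mu.\<close>
  define g where "g = fls_X_intpow j - r_comb b \<mu> c"
  have "fls_restrict {int \<mu>..<k} g \<in> Hk (int \<mu>)"
    by (simp add: Hk_def fls_restrict_nth)
  then have "r_comb b \<mu> c + fls_restrict {int \<mu>..<k} g \<in> W_mu b \<mu>"
    unfolding W_mu_eq_r_comb by blast
  moreover have "fls_restrict J (r_comb b \<mu> c + fls_restrict {int \<mu>..<k} g) = fls_X_intpow j"
  proof (rule fls_eqI)
    fix n
    have "r_comb b \<mu> c = fls_X_intpow j - g"
      by (simp add: g_def)
    moreover have "n < 0 \<Longrightarrow> g $$ n = 0"
      using \<open>fls_X_intpow j - r_comb b \<mu> c \<in> Hk 0\<close> by (simp add: g_def Hk_def)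
    ultimately show "fls_restrict J (r_comb b \<mu> c + fls_restrict {int \<mu>..<k} g) $$ n
        = fls_X_intpow j $$ n"
      using assms True by (auto simp: fls_restrict_nth)
  qed
  ultimately show ?thesis
    by (metis image_eqI)
qed

lemma quot_dim_W_mu:
  assumes "int \<mu> \<le> k"
  shows "quot_dim (W_mu b \<mu>) (Hk k) = nat k"
proof (rule quot_dim_eqI[where J = "{- int \<mu>..<0} \<union> {int \<mu>..<k}"])
  show "\<forall>i<nat k. W_mu_basis b \<mu> i \<in> W_mu b \<mu>"
    by (simp add: W_mu_basis_in_W_mu)
  show "W_mu b \<mu> \<subseteq> {(\<Sum>i<nat k. fls_const (c i) * W_mu_basis b \<mu> i) + u | c u. u \<in> Hk k}"
    using assms by (rule W_mu_spanned_by_basis)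
  show "card ({- int \<mu>..<0} \<union> {int \<mu>..<k}) = nat k"
    using assms by (subst card_Un_disjoint) auto
  show "fls_X_intpow ` ({- int \<mu>..<0} \<union> {int \<mu>..<k})
      \<subseteq> fls_restrict ({- int \<mu>..<0} \<union> {int \<mu>..<k}) ` W_mu b \<mu>"
    using fls_X_intpow_in_restrict_W_mu by blast
qed (use assms in \<open>auto simp: Hk_def\<close>)

theorem proposition2:
  fixes b :: complex and \<mu> :: nat
  assumes "b \<noteq> 0" and "b \<noteq> 1"
  shows "W_mu b \<mu> \<in> Gr_j 0
    \<and> CKP (W_mu b \<mu>)
    \<and> W_mu b \<mu> = {f \<in> Hk (- int \<mu>). \<forall>i\<in>{1..\<mu>}. fls_residue (f * neg_z (r_fun b i)) = 0}"
proof (intro conjI)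
  have "0 = k - int (quot_dim (W_mu b \<mu>) (Hk k))" if "Hk k \<subseteq> W_mu b \<mu>" for k
    using quot_dim_W_mu le_if_Hk_subset_W_mu[OF that] by simp
  then show "W_mu b \<mu> \<in> Gr_j 0"
    unfolding Gr_j_def using W_mu_in_Gr by blast
  show "CKP (W_mu b \<mu>)"
    unfolding CKP_def using W_mu_CKP by blast
  show "W_mu b \<mu> = {f \<in> Hk (- int \<mu>). \<forall>i\<in>{1..\<mu>}. fls_residue (f * neg_z (r_fun b i)) = 0}"
    by (rule W_mu_eq_annihilator)
qed

end
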